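(* Fix a bin size $B\in\mathbb{N}$, $B\ge 1$, with bin boundaries $L_j=jB$ for $j=1,2,\ldots$, and a level $\alpha\in(0,1)$. Let $T^{(1)},\ldots,T^{(n)},T^{(n+1)}$ be independent and identically distributed random token sequences (reasoning traces), where $T^{(1)},\dots,T^{(n)}$ form the calibration set and $T^{(n+1)}$ is the test trace. For a trace $T$ and prefix length $\ell>0$ let $u(T;\ell)$ be the number of keyword arrivals in the prefix $T[1:\ell]$ divided by $\ell$, and write $u_i(L_j)=u(T^{(i)};L_j)$. For each $i\in\{1,\ldots,n+1\}$ define $$M_i=\max_{j:\,L_j\le |T^{(i)}|} u_i(L_j),$$ with the convention that $M_i=-\infty$ if no boundary satisfies $L_j\le|T^{(i)}|$. Let $k=\lceil (n+1)(1-\alpha)\rceil$ and set $\tau^\star=M_{(k)}$, the $k$-th smallest of $M_1,\ldots,M_n$, with $\tau^\star=+\infty$ if $k>n$. Then $$\mathbb{P}\big(\exists j \text{ with } L_j\le |T^{(n+1)}|:\ u_{n+1}(L_j)>\tau^\star\big)=\mathbb{P}(M_{n+1}>\tau^\star)\le\alpha.$$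
   Context: A reasoning trace $T=(t_1,\ldots,t_L)$ is a finite sequence of tokens of length $|T|=L$. A fixed finite set $\mathcal{K}$ of keyword phrases is given, and the "keyword arrivals" in a trace are a deterministic set of token positions determined by $\mathcal{K}$ (positions at which a keyword phrase is detected by a fixed deterministic matching procedure); thus $u(T;\ell)$ is a deterministic function of $T$ and $\ell$. The stopping rule halts a test trace at the first bin boundary $L_j$ at which $u(T;L_j)>\tau^\star$; the event bounded is the event that the test trace is stopped. *)

theory Defs
  imports "HOL-Probability.Probability"
begin

text \<open>Keyword arrivals of a trace: an arbitrary deterministic function giving the set of
  (1-based) token positions at which a keyword phrase is detected.\<close>

definition kw_rate :: "('a list \<Rightarrow> nat set) \<Rightarrow> 'a list \<Rightarrow> nat \<Rightarrow> real" where
  "kw_rate arr T l = real (card {p \<in> arr T. 1 \<le> p \<and> p \<le> l}) / real l"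

text \<open>Bin boundaries are L_j = j * B for j = 1, 2, ...; M(T) is the maximum of the rate over
  boundaries within the trace, with the convention -\<infinity> (Sup of the empty set in ereal).\<close>

definition max_rate :: "('a list \<Rightarrow> nat set) \<Rightarrow> nat \<Rightarrow> 'a list \<Rightarrow> ereal" where
  "max_rate arr B T = Sup ((\<lambda>j. ereal (kw_rate arr T (j * B))) ` {j. 1 \<le> j \<and> j * B \<le> length T})"

definition conf_threshold :: "real \<Rightarrow> ereal list \<Rightarrow> ereal" where
  "conf_threshold \<alpha> ms =
     (let n = length ms; k = nat \<lceil>(real n + 1) * (1 - \<alpha>)\<rceil>
      in if k > n then \<infinity> else sort ms ! (k - 1))"

end

theory Submission
  imports Defs
begin

text \<open>The test trace is stopped iff its score exceeds the k-th smallest calibration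
  score, i.e. iff at least k of the n + 1 scores lie strictly below it. The scores are
  functions of i.i.d. traces, so the joint law of the traces is invariant under permutations
  and each of the n + 1 events "at least k scores lie strictly below score i" has the same
  probability. Pointwise, at most n + 1 - k of these events occur: the smallest score among
  the indices where one occurs has at least k scores strictly below it, and none of those
  indices is among them. Summing, (n + 1) P(stop) \<le> n + 1 - k \<le> (n + 1) \<alpha>. The argument
  works for any score of the traces.\<close>

lemma sorted_nth_less_iff_length_filter:
  fixes xs :: "'a::linorder list"
  assumes "sorted xs" "k < length xs"
  shows "xs ! k < x \<longleftrightarrow> k < length (filter (\<lambda>y. y < x) xs)"
proof
  assume "xs ! k < x"
  then have "{0..k} \<subseteq> {i. i < length xs \<and> xs ! i < x}"
    using assms by (auto intro: le_less_trans[OF sorted_nth_mono[OF assms(1)]])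
  from card_mono[OF _ this] show "k < length (filter (\<lambda>y. y < x) xs)"
    by (simp add: length_filter_conv_card)
next
  assume "k < length (filter (\<lambda>y. y < x) xs)"
  then have "k < card {i. i < length xs \<and> xs ! i < x}"
    by (simp add: length_filter_conv_card)
  moreover have "\<not> xs ! k < x \<Longrightarrow> {i. i < length xs \<and> xs ! i < x} \<subseteq> {0..<k}"
    using assms by (auto simp: not_less) (metis leD leI order.trans sorted_nth_mono)
  ultimately show "xs ! k < x"
    using card_mono[of "{0..<k}" "{i. i < length xs \<and> xs ! i < x}"] by fastforce
qed

lemma sort_nth_less_iff_length_filter:
  fixes xs :: "'a::linorder list"
  assumes "k < length xs"
  shows "sort xs ! k < x \<longleftrightarrow> k < length (filter (\<lambda>y. y < x) xs)"
proof -
  have "length (filter P (sort xs)) = length (filter P xs)" for P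
    by (metis mset_filter mset_sort size_mset)
  then show ?thesis
    using sorted_nth_less_iff_length_filter[of "sort xs" k x] assms by simp
qed

lemma conf_threshold_less_iff:
  assumes "\<alpha> < 1"
  shows "conf_threshold \<alpha> ms < x \<longleftrightarrow>
           nat \<lceil>(real (length ms) + 1) * (1 - \<alpha>)\<rceil> \<le> length (filter (\<lambda>y. y < x) ms)"
proof -
  define k where "k = nat \<lceil>(real (length ms) + 1) * (1 - \<alpha>)\<rceil>"
  have "0 < (real (length ms) + 1) * (1 - \<alpha>)"
    using assms by simp
  then have "1 \<le> k"
    unfolding k_def by linarith
  show ?thesis
  proof (cases "k \<le> length ms")
    case True
    then show ?thesis
      using \<open>1 \<le> k\<close> sort_nth_less_iff_length_filter[of "k - 1" ms x]
      unfolding conf_threshold_def Let_def k_def[symmetric] by auto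
  next
    case False
    moreover have "\<not> k \<le> length (filter (\<lambda>y. y < x) ms)"
      using False length_filter_le order_trans by blast
    ultimately show ?thesis
      unfolding conf_threshold_def Let_def k_def[symmetric] by simp
  qed
qed

lemma length_filter_map_upt:
  "length (filter P (map f [a..<b])) = card {j\<in>{a..<b}. P (f j)}"
  by (simp add: filter_map distinct_length_filter Int_def conj_commute)

lemma conf_threshold_less_iff_rank:
  fixes s :: "nat \<Rightarrow> ereal"
  assumes "\<alpha> < 1"
  shows "conf_threshold \<alpha> (map s [1..<n+1]) < s (n+1) \<longleftrightarrow>
           nat \<lceil>(real n + 1) * (1 - \<alpha>)\<rceil> \<le> card {j\<in>{1..n+1}. s j < s (n+1)}"
proof -
  have "{j\<in>{1..<n+1}. s j < s (n+1)} = {j\<in>{1..n+1}. s j < s (n+1)}"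
    by (auto simp: le_less)
  then show ?thesis
    using conf_threshold_less_iff[OF assms, of "map s [1..<n+1]" "s (n+1)"]
    unfolding length_filter_map_upt length_map length_upt by (simp del: upt_Suc)
qed

lemma less_max_rate_iff:
  "c < max_rate arr B T \<longleftrightarrow> (\<exists>j\<ge>1. j * B \<le> length T \<and> c < ereal (kw_rate arr T (j * B)))"
  unfolding max_rate_def less_Sup_iff by auto

lemma card_rank_ge_le:
  fixes s :: "'i \<Rightarrow> 'b::linorder"
  assumes "finite I"
  shows "card {i\<in>I. k \<le> card {j\<in>I. s j < s i}} \<le> card I - k"
proof (cases "{i\<in>I. k \<le> card {j\<in>I. s j < s i}} = {}")
  case False
  define J where "J = {i\<in>I. k \<le> card {j\<in>I. s j < s i}}"
  have "finite J" "J \<subseteq> I"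
    using assms by (auto simp: J_def)
  have "Min (s ` J) \<in> s ` J"
    using \<open>finite J\<close> False by (intro Min_in) (auto simp: J_def)
  then obtain i0 where "i0 \<in> J" "s i0 = Min (s ` J)"
    by (metis imageE)
  then have i0_min: "\<And>i. i \<in> J \<Longrightarrow> s i0 \<le> s i"
    using \<open>finite J\<close> by simp
  have "k \<le> card {j\<in>I. s j < s i0}"
    using \<open>i0 \<in> J\<close> by (simp add: J_def)
  also have "\<dots> \<le> card (I - J)"
    using i0_min assms by (intro card_mono) (auto dest: leD)
  also have "\<dots> = card I - card J"
    using \<open>finite J\<close> \<open>J \<subseteq> I\<close> by (rule card_Diff_subset)
  finally show ?thesis
    using card_mono[OF assms \<open>J \<subseteq> I\<close>] unfolding J_def[symmetric] by linarith
qed (simp only: card.empty zero_le)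

lemma card_permutes_Collect:
  assumes "\<sigma> permutes I"
  shows "card {j\<in>I. P (\<sigma> j)} = card {j\<in>I. P j}"
proof (rule bij_betw_same_card)
  have "\<sigma> ` {j\<in>I. P (\<sigma> j)} = {j\<in>I. P j}"
  proof (intro equalityI subsetI)
    fix j assume "j \<in> {j\<in>I. P j}"
    then show "j \<in> \<sigma> ` {j\<in>I. P (\<sigma> j)}"
      using assms by (intro image_eqI[of _ _ "inv \<sigma> j"])
        (simp_all add: permutes_inverses(1) permutes_in_image permutes_inv)
  qed (use assms in \<open>auto simp: permutes_in_image\<close>)
  then show "bij_betw \<sigma> {j\<in>I. P (\<sigma> j)} {j\<in>I. P j}"
    using permutes_inj_on[OF assms] by (auto simp: bij_betw_def intro: inj_on_subset)
qed

lemma sets_PiM_count_space_countable: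
  assumes "finite I"
  shows "sets (\<Pi>\<^sub>M i\<in>I. count_space (UNIV :: 'a::countable set)) = Pow (\<Pi>\<^sub>E i\<in>I. UNIV)"
proof (intro equalityI subsetI)
  fix A assume "A \<in> sets (\<Pi>\<^sub>M i\<in>I. count_space (UNIV :: 'a set))"
  then show "A \<in> Pow (\<Pi>\<^sub>E i\<in>I. UNIV)"
    using sets.sets_into_space by (fastforce simp: space_PiM)
next
  fix A assume A: "A \<in> Pow (\<Pi>\<^sub>E i\<in>I. (UNIV :: 'a set))"
  have "countable (\<Pi>\<^sub>E i\<in>I. (UNIV :: 'a set))"
    using assms by (simp add: countable_PiE)
  with A have "countable A"
    by (auto intro: countable_subset)
  moreover have "{a} \<in> sets (\<Pi>\<^sub>M i\<in>I. count_space UNIV)" if "a \<in> A" for a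
  proof -
    have "a \<in> extensional I"
      using A that by (auto simp: PiE_def)
    then have "{a} = (\<Pi>\<^sub>E i\<in>I. {a i})"
      by (simp add: PiE_singleton)
    then show ?thesis
      using assms by (simp add: sets_PiM_I_finite)
  qed
  ultimately show "A \<in> sets (\<Pi>\<^sub>M i\<in>I. count_space UNIV)"
    by (rule sets.countable[rotated])
qed

context prob_space
begin

lemma sum_prob_le_of_card_le:
  assumes "finite I" "\<And>i. i \<in> I \<Longrightarrow> E i \<in> events"
    and "\<And>\<omega>. \<omega> \<in> space M \<Longrightarrow> card {i\<in>I. \<omega> \<in> E i} \<le> m"
  shows "(\<Sum>i\<in>I. prob (E i)) \<le> real m"
proof -
  have integrable: "integrable M (indicator (E i) :: 'a \<Rightarrow> real)" if "i \<in> I" for i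
    using assms(2)[OF that]
    by (intro integrable_real_indicator) (auto simp: emeasure_finite less_top[symmetric])
  have "(\<Sum>i\<in>I. prob (E i)) = expectation (\<lambda>\<omega>. \<Sum>i\<in>I. indicator (E i) \<omega>)"
    using assms(2) integrable by (simp add: Bochner_Integration.integral_sum)
  also have "\<dots> \<le> expectation (\<lambda>_. real m)"
  proof (rule integral_mono)
    fix \<omega> assume "\<omega> \<in> space M"
    have "(\<Sum>i\<in>I. indicator (E i) \<omega>) = real (card {i\<in>I. \<omega> \<in> E i})"
      using assms(1) by (simp add: indicator_def sum.If_cases Int_def)
    then show "(\<Sum>i\<in>I. indicator (E i) \<omega>) \<le> real m"
      using assms(3)[OF \<open>\<omega> \<in> space M\<close>] by simp
  qed (use integrable in simp_all)
  finally show ?thesis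
    by (simp add: prob_space)
qed

lemma distr_iid_vector:
  fixes X :: "'i \<Rightarrow> 'a \<Rightarrow> 'b"
  assumes "indep_vars (\<lambda>_. N) X I" "i0 \<in> I"
    and "\<And>i. i \<in> I \<Longrightarrow> distr M N (X i) = distr M N (X i0)"
  shows "distr M (\<Pi>\<^sub>M i\<in>I. N) (\<lambda>\<omega>. \<lambda>i\<in>I. X i \<omega>) = (\<Pi>\<^sub>M i\<in>I. distr M N (X i0))"
proof -
  have rv: "random_variable N (X i)" if "i \<in> I" for i
    using assms(1) that by (auto simp: indep_vars_def)
  have "I \<noteq> {}"
    using assms(2) by blast
  from indep_vars_iff_distr_eq_PiM'[where M'="\<lambda>_. N" and X=X, OF this rv] assms(1)
  have "distr M (\<Pi>\<^sub>M i\<in>I. N) (\<lambda>\<omega>. \<lambda>i\<in>I. X i \<omega>) = (\<Pi>\<^sub>M i\<in>I. distr M N (X i))"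
    by blast
  also have "\<dots> = (\<Pi>\<^sub>M i\<in>I. distr M N (X i0))"
    using assms(3) by (rule PiM_cong[OF refl])
  finally show ?thesis .
qed

lemma distr_iid_vector_permutes:
  fixes X :: "'i \<Rightarrow> 'a \<Rightarrow> 'b"
  assumes "indep_vars (\<lambda>_. N) X I" "i0 \<in> I"
    and "\<And>i. i \<in> I \<Longrightarrow> distr M N (X i) = distr M N (X i0)"
    and "\<sigma> permutes I"
  shows "distr M (\<Pi>\<^sub>M i\<in>I. N) (\<lambda>\<omega>. \<lambda>i\<in>I. X (\<sigma> i) \<omega>) =
         distr M (\<Pi>\<^sub>M i\<in>I. N) (\<lambda>\<omega>. \<lambda>i\<in>I. X i \<omega>)"
proof -
  let ?PN = "\<Pi>\<^sub>M i\<in>I. N" and ?Q = "\<Pi>\<^sub>M i\<in>I. distr M N (X i0)"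
  define t where "t x = (\<lambda>i\<in>I. x (\<sigma> i))" for x :: "'i \<Rightarrow> 'b"
  have rv: "random_variable N (X i)" if "i \<in> I" for i
    using assms(1) that by (auto simp: indep_vars_def)
  then have X_meas: "(\<lambda>\<omega>. \<lambda>i\<in>I. X i \<omega>) \<in> measurable M ?PN"
    by (intro measurable_restrict) auto
  have t_meas: "t \<in> measurable ?PN ?PN"
    unfolding t_def using permutes_in_image[OF assms(4)]
    by (intro measurable_restrict measurable_component_singleton) auto
  have "prob_space (distr M N (X i0))"
    using rv[OF assms(2)] by (rule prob_space_distr)
  then have reindex: "distr ?Q ?Q t = ?Q"
    unfolding t_def using permutes_inj_on[OF assms(4)] permutes_in_image[OF assms(4)]
    by (subst distr_PiM_reindex) auto
  have "distr M ?PN (\<lambda>\<omega>. \<lambda>i\<in>I. X (\<sigma> i) \<omega>) = distr M ?PN (t \<circ> (\<lambda>\<omega>. \<lambda>i\<in>I. X i \<omega>))"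
    using permutes_in_image[OF assms(4)] by (intro distr_cong) (auto simp: t_def)
  also have "\<dots> = distr (distr M ?PN (\<lambda>\<omega>. \<lambda>i\<in>I. X i \<omega>)) ?PN t"
    using t_meas X_meas by (rule distr_distr[symmetric])
  also have "\<dots> = distr ?Q ?Q t"
    by (intro distr_cong sets_PiM_cong) (simp_all add: distr_iid_vector[OF assms(1-3)])
  also have "\<dots> = distr M ?PN (\<lambda>\<omega>. \<lambda>i\<in>I. X i \<omega>)"
    using reindex distr_iid_vector[OF assms(1-3)] by simp
  finally show ?thesis .
qed

lemma vector_pred_in_events:
  fixes X :: "'i \<Rightarrow> 'a \<Rightarrow> 'b::countable"
  assumes "finite I" "\<And>i. i \<in> I \<Longrightarrow> random_variable (count_space UNIV) (X i)"
  shows "{\<omega>\<in>space M. P (\<lambda>i\<in>I. X i \<omega>)} \<in> events"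
proof -
  let ?PN = "\<Pi>\<^sub>M i\<in>I. count_space (UNIV :: 'b set)"
  have "{x\<in>space ?PN. P x} \<in> sets ?PN"
    using assms(1) by (simp add: sets_PiM_count_space_countable space_PiM)
  moreover have X_meas: "(\<lambda>\<omega>. \<lambda>i\<in>I. X i \<omega>) \<in> measurable M ?PN"
    using assms(2) by (intro measurable_restrict) auto
  ultimately have "(\<lambda>\<omega>. \<lambda>i\<in>I. X i \<omega>) -` {x\<in>space ?PN. P x} \<inter> space M \<in> events"
    by (rule measurable_sets[rotated])
  also have "(\<lambda>\<omega>. \<lambda>i\<in>I. X i \<omega>) -` {x\<in>space ?PN. P x} \<inter> space M = {\<omega>\<in>space M. P (\<lambda>i\<in>I. X i \<omega>)}"
    using measurable_space[OF X_meas] by auto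
  finally show ?thesis .
qed

lemma prob_iid_vector_permutes:
  fixes X :: "'i \<Rightarrow> 'a \<Rightarrow> 'b::countable"
  assumes "finite I" "indep_vars (\<lambda>_. count_space UNIV) X I" "i0 \<in> I"
    and "\<And>i. i \<in> I \<Longrightarrow> distr M (count_space UNIV) (X i) = distr M (count_space UNIV) (X i0)"
    and "\<sigma> permutes I"
  shows "prob {\<omega>\<in>space M. P (\<lambda>i\<in>I. X (\<sigma> i) \<omega>)} = prob {\<omega>\<in>space M. P (\<lambda>i\<in>I. X i \<omega>)}"
proof -
  let ?PN = "\<Pi>\<^sub>M i\<in>I. count_space (UNIV :: 'b set)"
  have P_sets: "{x\<in>space ?PN. P x} \<in> sets ?PN"
    using assms(1) by (simp add: sets_PiM_count_space_countable space_PiM)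
  have prob_eq_distr: "prob {\<omega>\<in>space M. P (Y \<omega>)} = measure (distr M ?PN Y) {x\<in>space ?PN. P x}"
    if "Y \<in> measurable M ?PN" for Y
    using measurable_space[OF that]
    by (subst measure_distr[OF that P_sets]) (auto intro: arg_cong[where f=prob])
  have rv: "random_variable (count_space UNIV) (X i)" if "i \<in> I" for i
    using assms(2) that by (auto simp: indep_vars_def)
  have "(\<lambda>\<omega>. \<lambda>i\<in>I. X (\<sigma> i) \<omega>) \<in> measurable M ?PN" "(\<lambda>\<omega>. \<lambda>i\<in>I. X i \<omega>) \<in> measurable M ?PN"
    using rv permutes_in_image[OF assms(5)] by (auto intro!: measurable_restrict)
  then show ?thesis
    using distr_iid_vector_permutes[OF assms(2-5)] by (simp add: prob_eq_distr)
qed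

lemma iid_rank_prob_le:
  fixes X :: "'i \<Rightarrow> 'a \<Rightarrow> 'b::countable" and g :: "'b \<Rightarrow> 'c::linorder"
  assumes "finite I" "indep_vars (\<lambda>_. count_space UNIV) X I" "i0 \<in> I"
    and "\<And>i. i \<in> I \<Longrightarrow> distr M (count_space UNIV) (X i) = distr M (count_space UNIV) (X i0)"
    and "i \<in> I"
  shows "real (card I) * prob {\<omega>\<in>space M. k \<le> card {j\<in>I. g (X j \<omega>) < g (X i \<omega>)}}
           \<le> real (card I - k)"
proof -
  define rank_ge where "rank_ge l x = (k \<le> card {j\<in>I. g (x j) < g (x l)})" for l x
  define E where "E l = {\<omega>\<in>space M. rank_ge l (\<lambda>j\<in>I. X j \<omega>)}" for l
  have E_eq: "E l = {\<omega>\<in>space M. k \<le> card {j\<in>I. g (X j \<omega>) < g (X l \<omega>)}}" if "l \<in> I" for l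
    using that by (simp add: E_def rank_ge_def cong: conj_cong)
  have "E l \<in> events" for l
    using assms(1,2) by (auto simp: E_def indep_vars_def intro: vector_pred_in_events)
  moreover have E_prob: "prob (E l) = prob (E i)" if "l \<in> I" for l
  proof -
    have \<sigma>: "Transposition.transpose i l permutes I"
      using assms(5) that by (rule permutes_swap_id)
    have "rank_ge l (\<lambda>j\<in>I. X (Transposition.transpose i l j) \<omega>) = rank_ge i (\<lambda>j\<in>I. X j \<omega>)" for \<omega>
      using that assms(5) card_permutes_Collect[OF \<sigma>, of "\<lambda>j. g (X j \<omega>) < g (X i \<omega>)"]
      by (simp add: rank_ge_def permutes_in_image[OF \<sigma>] cong: conj_cong)
    then show ?thesis
      using prob_iid_vector_permutes[OF assms(1-4) \<sigma>, of "rank_ge l"] by (simp add: E_def)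
  qed
  moreover have "card {l\<in>I. \<omega> \<in> E l} \<le> card I - k" if "\<omega> \<in> space M" for \<omega>
    using card_rank_ge_le[OF assms(1), of k "\<lambda>j. g (X j \<omega>)"] that
    by (simp add: E_eq cong: conj_cong)
  ultimately have "(\<Sum>l\<in>I. prob (E l)) \<le> real (card I - k)"
    by (intro sum_prob_le_of_card_le assms(1))
  then show ?thesis
    using E_eq[OF assms(5)] by (simp add: E_prob)
qed

lemma conformal_threshold_prob_le:
  fixes X :: "nat \<Rightarrow> 'a \<Rightarrow> 'b::countable" and g :: "'b \<Rightarrow> ereal"
  assumes "0 < \<alpha>" "\<alpha> < 1"
    and "indep_vars (\<lambda>_. count_space UNIV) X {1..n+1}"
    and "\<And>i. i \<in> {1..n+1} \<Longrightarrow> distr M (count_space UNIV) (X i) = distr M (count_space UNIV) (X 1)"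
  shows "prob {\<omega>\<in>space M. conf_threshold \<alpha> (map (\<lambda>i. g (X i \<omega>)) [1..<n+1]) < g (X (n+1) \<omega>)} \<le> \<alpha>"
proof -
  define k where "k = nat \<lceil>(real n + 1) * (1 - \<alpha>)\<rceil>"
  define p where
    "p = prob {\<omega>\<in>space M. conf_threshold \<alpha> (map (\<lambda>i. g (X i \<omega>)) [1..<n+1]) < g (X (n+1) \<omega>)}"
  have "p = prob {\<omega>\<in>space M. k \<le> card {j\<in>{1..n+1}. g (X j \<omega>) < g (X (n+1) \<omega>)}}"
    unfolding p_def k_def
    by (intro arg_cong[where f=prob] Collect_cong conj_cong refl
        conf_threshold_less_iff_rank[OF assms(2)])
  then have "real (n+1) * p \<le> real (n + 1 - k)"
    using iid_rank_prob_le[OF _ assms(3) _ assms(4), of "n+1" k g] by simp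
  moreover have "(real n + 1) * (1 - \<alpha>) \<le> k"
    unfolding k_def by linarith
  moreover have "0 \<le> (real n + 1) * \<alpha>"
    using assms(1) by simp
  then have "k \<le> n + 1"
    unfolding k_def by (simp add: algebra_simps)
  ultimately have "real (n+1) * p \<le> real (n+1) * \<alpha>"
    by (simp add: of_nat_diff algebra_simps)
  then show ?thesis
    unfolding p_def by (rule mult_left_le_imp_le) simp
qed

end

theorem proposition1:
  fixes M :: "'m measure"
    and X :: "nat \<Rightarrow> 'm \<Rightarrow> ('a::countable) list"
    and arr :: "'a list \<Rightarrow> nat set"
    and B n :: nat and \<alpha> :: real
  assumes "prob_space M"
    and "B \<ge> 1"
    and "0 < \<alpha>" "\<alpha> < 1"
    and "prob_space.indep_vars M (\<lambda>_. count_space UNIV) X {1..n+1}"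
    and "\<And>i. i \<in> {1..n+1} \<Longrightarrow>
           distr M (count_space UNIV) (X i) = distr M (count_space UNIV) (X 1)"
  defines "\<tau> \<equiv> \<lambda>\<omega>. conf_threshold \<alpha> (map (\<lambda>i. max_rate arr B (X i \<omega>)) [1..<n+1])"
  shows "measure M {\<omega> \<in> space M. \<exists>j\<ge>1. j * B \<le> length (X (n+1) \<omega>) \<and>
                         ereal (kw_rate arr (X (n+1) \<omega>) (j * B)) > \<tau> \<omega>}
           = measure M {\<omega> \<in> space M. max_rate arr B (X (n+1) \<omega>) > \<tau> \<omega>}
       \<and> measure M {\<omega> \<in> space M. max_rate arr B (X (n+1) \<omega>) > \<tau> \<omega>} \<le> \<alpha>"
proof -
  interpret prob_space M by fact
  have "prob {\<omega>\<in>space M. \<tau> \<omega> < max_rate arr B (X (n+1) \<omega>)} \<le> \<alpha>"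
    unfolding \<tau>_def using assms(3-6) by (rule conformal_threshold_prob_le[where g="max_rate arr B"])
  then show ?thesis
    by (simp add: less_max_rate_iff)
qed

end
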